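(* Let $C\in\mathscr{C}$ and let $Z_C$ be obtained as follows: choose a distinguished triangle $V\to U\overset{a}{\to}C\to V[1]$ with $U\in\mathcal{U},V\in\mathcal{V}$; choose a distinguished triangle $T[-1]\to S[-1]\overset{b}{\to}U\to T$ with $S\in\mathcal{S},T\in\mathcal{T}$; and choose a distinguished triangle $S[-1]\overset{a\circ b}{\to}C\overset{z_C}{\to}Z_C\to S$. Then: (1) $Z_C\in\mathscr{C}^+$; (2) if $C\in\mathscr{C}^-$, then $Z_C\in\mathcal{H}$.
   Context: $\mathscr{C}$ is a triangulated category with shift $[1]$; subcategories are full, additive, closed under isomorphisms and direct summands. $\mathrm{Ext}^1(X,Y)=\mathscr{C}(X,Y[1])$. $\mathcal{M}\ast\mathcal{N}$ is the full subcategory of objects $C$ admitting a distinguished triangle $M\to C\to N\to M[1]$ with $M\in\mathcal{M}$, $N\in\mathcal{N}$. A cotorsion pair $(\mathcal{U},\mathcal{V})$: $\mathrm{Ext}^1(\mathcal{U},\mathcal{V})=0$ and $\mathscr{C}=\mathcal{U}\ast\mathcal{V}[1]$. Fix a twin cotorsion pair, i.e. cotorsion pairs $(\mathcal{S},\mathcal{T}),(\mathcal{U},\mathcal{V})$ with $\mathrm{Ext}^1(\mathcal{S},\mathcal{V})=0$. Put $\mathcal{W}=\mathcal{T}\cap\mathcal{U}$, $\mathscr{C}^-=\mathcal{S}[-1]\ast\mathcal{W}$, $\mathscr{C}^+=\mathcal{W}\ast\mathcal{V}[1]$, $\mathcal{H}=\mathscr{C}^+\cap\mathscr{C}^-$.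 *)

theory Defs
  imports Main
begin

text \<open>A triangle X -f-> Y -g-> Z -h-> X[1] is recorded by the triple of its morphisms.\<close>

record ('o, 'm) tcat =
  Ob    :: "'o set"
  Mor   :: "'m set"
  tdom  :: "'m \<Rightarrow> 'o"
  tcod  :: "'m \<Rightarrow> 'o"
  cmp   :: "'m \<Rightarrow> 'm \<Rightarrow> 'm"   (* cmp g f = g \<circ> f *)
  ident :: "'o \<Rightarrow> 'm"
  plus  :: "'m \<Rightarrow> 'm \<Rightarrow> 'm"
  zer   :: "'o \<Rightarrow> 'o \<Rightarrow> 'm"
  ngt   :: "'m \<Rightarrow> 'm"
  shO   :: "'o \<Rightarrow> 'o"
  shM   :: "'m \<Rightarrow> 'm"
  dtri  :: "('m \<times> 'm \<times> 'm) set"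

definition hom :: "('o, 'm) tcat \<Rightarrow> 'o \<Rightarrow> 'o \<Rightarrow> 'm set" where
  "hom C X Y = {f \<in> Mor C. tdom C f = X \<and> tcod C f = Y}"

definition is_iso_obj :: "('o, 'm) tcat \<Rightarrow> 'o \<Rightarrow> 'o \<Rightarrow> bool" where
  "is_iso_obj C X Y \<longleftrightarrow> (\<exists>f\<in>hom C X Y. \<exists>g\<in>hom C Y X.
      cmp C g f = ident C X \<and> cmp C f g = ident C Y)"

definition is_isomorphism :: "('o, 'm) tcat \<Rightarrow> 'm \<Rightarrow> bool" where
  "is_isomorphism C f \<longleftrightarrow> f \<in> Mor C \<and> (\<exists>g\<in>hom C (tcod C f) (tdom C f).
      cmp C g f = ident C (tdom C f) \<and> cmp C f g = ident C (tcod C f))"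

definition is_zero_obj :: "('o, 'm) tcat \<Rightarrow> 'o \<Rightarrow> bool" where
  "is_zero_obj C Z \<longleftrightarrow> Z \<in> Ob C \<and> ident C Z = zer C Z Z"

definition is_biproduct :: "('o, 'm) tcat \<Rightarrow> 'o \<Rightarrow> 'o \<Rightarrow> 'o \<Rightarrow> bool" where
  "is_biproduct C X Y B \<longleftrightarrow> X \<in> Ob C \<and> Y \<in> Ob C \<and> B \<in> Ob C \<and>
     (\<exists>i1\<in>hom C X B. \<exists>i2\<in>hom C Y B. \<exists>p1\<in>hom C B X. \<exists>p2\<in>hom C B Y.
        cmp C p1 i1 = ident C X \<and> cmp C p2 i2 = ident C Y \<and>
        cmp C p1 i2 = zer C Y X \<and> cmp C p2 i1 = zer C X Y \<and>
        plus C (cmp C i1 p1) (cmp C i2 p2) = ident C B)"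

definition is_category :: "('o, 'm) tcat \<Rightarrow> bool" where
  "is_category C \<longleftrightarrow>
     (\<forall>f\<in>Mor C. tdom C f \<in> Ob C \<and> tcod C f \<in> Ob C) \<and>
     (\<forall>X\<in>Ob C. ident C X \<in> hom C X X) \<and>
     (\<forall>X\<in>Ob C. \<forall>Y\<in>Ob C. \<forall>Z\<in>Ob C. \<forall>f\<in>hom C X Y. \<forall>g\<in>hom C Y Z. cmp C g f \<in> hom C X Z) \<and>
     (\<forall>X\<in>Ob C. \<forall>Y\<in>Ob C. \<forall>f\<in>hom C X Y.
        cmp C (ident C Y) f = f \<and> cmp C f (ident C X) = f) \<and>
     (\<forall>W\<in>Ob C. \<forall>X\<in>Ob C. \<forall>Y\<in>Ob C. \<forall>Z\<in>Ob C.
        \<forall>f\<in>hom C W X. \<forall>g\<in>hom C X Y. \<forall>h\<in>hom C Y Z.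
          cmp C h (cmp C g f) = cmp C (cmp C h g) f)"

definition is_preadditive :: "('o, 'm) tcat \<Rightarrow> bool" where
  "is_preadditive C \<longleftrightarrow> is_category C \<and>
     (\<forall>X\<in>Ob C. \<forall>Y\<in>Ob C.
        zer C X Y \<in> hom C X Y \<and>
        (\<forall>f\<in>hom C X Y. \<forall>g\<in>hom C X Y. plus C f g \<in> hom C X Y) \<and>
        (\<forall>f\<in>hom C X Y. ngt C f \<in> hom C X Y) \<and>
        (\<forall>f\<in>hom C X Y. \<forall>g\<in>hom C X Y. \<forall>h\<in>hom C X Y.
            plus C (plus C f g) h = plus C f (plus C g h)) \<and>
        (\<forall>f\<in>hom C X Y. \<forall>g\<in>hom C X Y. plus C f g = plus C g f) \<and>
        (\<forall>f\<in>hom C X Y. plus C f (zer C X Y) = f) \<and>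
        (\<forall>f\<in>hom C X Y. plus C f (ngt C f) = zer C X Y)) \<and>
     (\<forall>X\<in>Ob C. \<forall>Y\<in>Ob C. \<forall>Z\<in>Ob C.
        (\<forall>f\<in>hom C X Y. \<forall>g\<in>hom C Y Z. \<forall>g'\<in>hom C Y Z.
            cmp C (plus C g g') f = plus C (cmp C g f) (cmp C g' f)) \<and>
        (\<forall>f\<in>hom C X Y. \<forall>f'\<in>hom C X Y. \<forall>g\<in>hom C Y Z.
            cmp C g (plus C f f') = plus C (cmp C g f) (cmp C g f')))"

definition is_additive :: "('o, 'm) tcat \<Rightarrow> bool" where
  "is_additive C \<longleftrightarrow> is_preadditive C \<and>
     (\<exists>Z. is_zero_obj C Z) \<and>
     (\<forall>X\<in>Ob C. \<forall>Y\<in>Ob C. \<exists>B. is_biproduct C X Y B)"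

definition is_shift :: "('o, 'm) tcat \<Rightarrow> bool" where
  "is_shift C \<longleftrightarrow>
     (\<forall>X\<in>Ob C. shO C X \<in> Ob C) \<and>
     (\<forall>X\<in>Ob C. \<forall>Y\<in>Ob C. \<forall>f\<in>hom C X Y. shM C f \<in> hom C (shO C X) (shO C Y)) \<and>
     (\<forall>X\<in>Ob C. shM C (ident C X) = ident C (shO C X)) \<and>
     (\<forall>X\<in>Ob C. \<forall>Y\<in>Ob C. \<forall>Z\<in>Ob C. \<forall>f\<in>hom C X Y. \<forall>g\<in>hom C Y Z.
        shM C (cmp C g f) = cmp C (shM C g) (shM C f)) \<and>
     (\<forall>X\<in>Ob C. \<forall>Y\<in>Ob C. \<forall>f\<in>hom C X Y. \<forall>g\<in>hom C X Y.
        shM C (plus C f g) = plus C (shM C f) (shM C g)) \<and>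
     (\<forall>X\<in>Ob C. \<forall>Y\<in>Ob C. bij_betw (shM C) (hom C X Y) (hom C (shO C X) (shO C Y))) \<and>
     (\<forall>Y\<in>Ob C. \<exists>X\<in>Ob C. is_iso_obj C (shO C X) Y)"

definition is_triangle :: "('o, 'm) tcat \<Rightarrow> 'm \<Rightarrow> 'm \<Rightarrow> 'm \<Rightarrow> bool" where
  "is_triangle C f g h \<longleftrightarrow> f \<in> Mor C \<and> g \<in> Mor C \<and> h \<in> Mor C \<and>
     tcod C f = tdom C g \<and> tcod C g = tdom C h \<and> tcod C h = shO C (tdom C f)"

definition dist :: "('o, 'm) tcat \<Rightarrow> 'm \<Rightarrow> 'm \<Rightarrow> 'm \<Rightarrow> bool" where
  "dist C f g h \<longleftrightarrow> is_triangle C f g h \<and> (f, g, h) \<in> dtri C"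

definition is_triangulated :: "('o, 'm) tcat \<Rightarrow> bool" where
  "is_triangulated C \<longleftrightarrow> is_additive C \<and> is_shift C \<and>
     (\<forall>t\<in>dtri C. case t of (f, g, h) \<Rightarrow> is_triangle C f g h) \<and>
     \<comment> \<open>TR1: closure under isomorphisms of triangles\<close>
     (\<forall>f g h f' g' h' u v w. dist C f g h \<and> is_triangle C f' g' h' \<and>
        is_isomorphism C u \<and> is_isomorphism C v \<and> is_isomorphism C w \<and>
        u \<in> hom C (tdom C f) (tdom C f') \<and> v \<in> hom C (tdom C g) (tdom C g') \<and>
        w \<in> hom C (tdom C h) (tdom C h') \<and>
        cmp C v f = cmp C f' u \<and> cmp C w g = cmp C g' v \<and>
        cmp C (shM C u) h = cmp C h' w
        \<longrightarrow> dist C f' g' h') \<and>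
     \<comment> \<open>TR1: X = X \<rightarrow> 0 \<rightarrow> X[1] is distinguished\<close>
     (\<forall>X\<in>Ob C. \<forall>Z. is_zero_obj C Z \<longrightarrow>
        dist C (ident C X) (zer C X Z) (zer C Z (shO C X))) \<and>
     \<comment> \<open>TR1: every morphism extends to a distinguished triangle\<close>
     (\<forall>f\<in>Mor C. \<exists>g h. dist C f g h) \<and>
     \<comment> \<open>TR2: rotation\<close>
     (\<forall>f g h. dist C f g h \<longleftrightarrow> dist C g h (ngt C (shM C f))) \<and>
     \<comment> \<open>TR3: morphisms of triangles\<close>
     (\<forall>f g h f' g' h' u v. dist C f g h \<and> dist C f' g' h' \<and>
        u \<in> hom C (tdom C f) (tdom C f') \<and> v \<in> hom C (tdom C g) (tdom C g') \<and>
        cmp C v f = cmp C f' u \<longrightarrow>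
        (\<exists>w\<in>hom C (tdom C h) (tdom C h').
           cmp C w g = cmp C g' v \<and> cmp C (shM C u) h = cmp C h' w)) \<and>
     \<comment> \<open>TR4: octahedral axiom\<close>
     (\<forall>f g f1 f2 g1 g2 h1 h2. tcod C f = tdom C g \<and>
        dist C f f1 f2 \<and> dist C g g1 g2 \<and> dist C (cmp C g f) h1 h2 \<longrightarrow>
        (\<exists>u v. u \<in> hom C (tdom C f2) (tdom C h2) \<and> v \<in> hom C (tdom C h2) (tdom C g2) \<and>
           dist C u v (cmp C (shM C f1) g2) \<and>
           cmp C u f1 = cmp C h1 g \<and> cmp C h2 u = f2 \<and>
           cmp C v h1 = g1 \<and> cmp C g2 v = cmp C (shM C f) h2))"

text \<open>Full additive subcategory closed under isomorphisms and direct summands,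
  identified with its class of objects.\<close>
definition is_subcat :: "('o, 'm) tcat \<Rightarrow> 'o set \<Rightarrow> bool" where
  "is_subcat C A \<longleftrightarrow> A \<subseteq> Ob C \<and>
     (\<exists>Z\<in>A. is_zero_obj C Z) \<and>
     (\<forall>X\<in>A. \<forall>Y. is_iso_obj C X Y \<longrightarrow> Y \<in> A) \<and>
     (\<forall>X Y B. is_biproduct C X Y B \<longrightarrow> X \<in> A \<longrightarrow> Y \<in> A \<longrightarrow> B \<in> A) \<and>
     (\<forall>X Y B. is_biproduct C X Y B \<longrightarrow> B \<in> A \<longrightarrow> X \<in> A)"

text \<open>Ext^1(A,B) = 0, where Ext^1(X,Y) = Hom(X, Y[1]).\<close>
definition ext1_zero :: "('o, 'm) tcat \<Rightarrow> 'o set \<Rightarrow> 'o set \<Rightarrow> bool" where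
  "ext1_zero C A B \<longleftrightarrow> (\<forall>X\<in>A. \<forall>Y\<in>B. hom C X (shO C Y) = {zer C X (shO C Y)})"

definition ext_star :: "('o, 'm) tcat \<Rightarrow> 'o set \<Rightarrow> 'o set \<Rightarrow> 'o set" where
  "ext_star C M N = {X \<in> Ob C. \<exists>A B f g h. A \<in> M \<and> B \<in> N \<and> dist C f g h \<and>
       f \<in> hom C A X \<and> g \<in> hom C X B}"

text \<open>A[1] and A[-1] as subcategories (closed under isomorphisms).\<close>
definition shift_up :: "('o, 'm) tcat \<Rightarrow> 'o set \<Rightarrow> 'o set" where
  "shift_up C A = {X \<in> Ob C. \<exists>Y\<in>A. is_iso_obj C (shO C Y) X}"

definition shift_down :: "('o, 'm) tcat \<Rightarrow> 'o set \<Rightarrow> 'o set" where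
  "shift_down C A = {X \<in> Ob C. \<exists>Y\<in>A. is_iso_obj C (shO C X) Y}"

definition cotorsion_pair :: "('o, 'm) tcat \<Rightarrow> 'o set \<Rightarrow> 'o set \<Rightarrow> bool" where
  "cotorsion_pair C U V \<longleftrightarrow> is_subcat C U \<and> is_subcat C V \<and> ext1_zero C U V \<and>
     Ob C = ext_star C U (shift_up C V)"

definition twin_cotorsion_pair ::
  "('o, 'm) tcat \<Rightarrow> 'o set \<Rightarrow> 'o set \<Rightarrow> 'o set \<Rightarrow> 'o set \<Rightarrow> bool" where
  "twin_cotorsion_pair C S T U V \<longleftrightarrow>
     cotorsion_pair C S T \<and> cotorsion_pair C U V \<and> ext1_zero C S V"

definition Wcore :: "'o set \<Rightarrow> 'o set \<Rightarrow> 'o set" where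
  "Wcore T U = T \<inter> U"

definition Cminus :: "('o, 'm) tcat \<Rightarrow> 'o set \<Rightarrow> 'o set \<Rightarrow> 'o set \<Rightarrow> 'o set" where
  "Cminus C S T U = ext_star C (shift_down C S) (Wcore T U)"

definition Cplus :: "('o, 'm) tcat \<Rightarrow> 'o set \<Rightarrow> 'o set \<Rightarrow> 'o set \<Rightarrow> 'o set" where
  "Cplus C T U V = ext_star C (Wcore T U) (shift_up C V)"

definition Hheart :: "('o, 'm) tcat \<Rightarrow> 'o set \<Rightarrow> 'o set \<Rightarrow> 'o set \<Rightarrow> 'o set \<Rightarrow> 'o set" where
  "Hheart C S T U V = Cplus C T U V \<inter> Cminus C S T U"

end

theory Submission
  imports Defs
begin

text \<open>
  For (1), apply the octahedral axiom to \<open>S[-1] \<rightarrow> U \<rightarrow> C\<close>: the cones \<open>T\<close>, \<open>Z\<^sub>C\<close>, \<open>V[1]\<close> of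
  \<open>b\<close>, \<open>a \<circ> b\<close>, \<open>a\<close> form a triangle \<open>T \<rightarrow> Z\<^sub>C \<rightarrow> V[1]\<close>. Since \<open>Ext\<^sup>1(\<S>,\<V>) = 0\<close> forces
  \<open>\<S> \<subseteq> \<U>\<close> and \<open>\<U>\<close> is closed under extensions, \<open>T\<close> (an extension of \<open>U\<close> by \<open>S\<close>) lies in
  \<open>\<W>\<close>.

  For (2), write \<open>P \<rightarrow> C \<rightarrow> W\<close> with \<open>P[1] \<in> \<S>\<close>, \<open>W \<in> \<W>\<close>. The octahedron on
  \<open>P \<rightarrow> C \<rightarrow> Z\<^sub>C\<close> exhibits the cone \<open>Q'\<close> of \<open>P \<rightarrow> Z\<^sub>C\<close> as an extension of \<open>W\<close> by an object
  of \<open>\<S>\<close>, so \<open>Q' \<in> \<U>\<close>. Now decompose \<open>P' \<rightarrow> Z\<^sub>C \<rightarrow> Q\<close> along \<open>(\<S>,\<T>)\<close>. A map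
  \<open>Q \<rightarrow> V'[1]\<close>, composed to \<open>Z\<^sub>C\<close>, vanishes on \<open>P\<close> because \<open>Hom(\<S>[-1],\<T>) = 0\<close>, so it
  factors through \<open>Q' \<in> \<U>\<close> and is zero on \<open>Z\<^sub>C\<close>; hence it factors through \<open>P'[1] \<in> \<S>\<close>
  and vanishes. Thus \<open>Ext\<^sup>1(Q,\<V>) = 0\<close>, i.e. \<open>Q \<in> \<T> \<inter> \<U>\<close>, and \<open>Z\<^sub>C \<in> \<S>[-1] * \<W>\<close>.
\<close>

locale triangulated_category =
  fixes C :: "('o, 'm) tcat"
  assumes triangulated: "is_triangulated C"
begin

lemma additive: "is_additive C"
  using triangulated unfolding is_triangulated_def by blast

lemma preadditive: "is_preadditive C"
  using additive unfolding is_additive_def by blast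

lemma category: "is_category C"
  using preadditive unfolding is_preadditive_def by blast

lemma shift: "is_shift C"
  using triangulated unfolding is_triangulated_def by blast

lemma hom_memD: "f \<in> hom C X Y \<Longrightarrow> f \<in> Mor C \<and> tdom C f = X \<and> tcod C f = Y"
  unfolding hom_def by blast

lemma hom_Ob: "f \<in> hom C X Y \<Longrightarrow> X \<in> Ob C \<and> Y \<in> Ob C"
  using category unfolding is_category_def hom_def by blast

lemma ident_hom [intro, simp]: "X \<in> Ob C \<Longrightarrow> ident C X \<in> hom C X X"
  using category unfolding is_category_def by blast

lemma comp_hom [intro]:
  assumes "f \<in> hom C X Y" "g \<in> hom C Y Z" shows "cmp C g f \<in> hom C X Z"
proof -
  have "X \<in> Ob C" "Y \<in> Ob C" "Z \<in> Ob C" using assms hom_Ob by blast+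
  with assms show ?thesis using category unfolding is_category_def by blast
qed

lemma comp_ident [simp]:
  assumes "f \<in> hom C X Y" shows "cmp C (ident C Y) f = f" "cmp C f (ident C X) = f"
proof -
  have "X \<in> Ob C" "Y \<in> Ob C" using assms hom_Ob by blast+
  with assms show "cmp C (ident C Y) f = f" "cmp C f (ident C X) = f"
    using category unfolding is_category_def by blast+
qed

lemma comp_ident_ident [simp]: "X \<in> Ob C \<Longrightarrow> cmp C (ident C X) (ident C X) = ident C X"
  using comp_ident ident_hom by blast

lemma comp_assoc:
  assumes "f \<in> hom C W X" "g \<in> hom C X Y" "h \<in> hom C Y Z"
  shows "cmp C h (cmp C g f) = cmp C (cmp C h g) f"
proof -
  have "W \<in> Ob C" "X \<in> Ob C" "Y \<in> Ob C" "Z \<in> Ob C"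
    using assms hom_Ob by blast+
  with assms show ?thesis using category unfolding is_category_def by blast
qed

lemma zer_hom [intro, simp]: "X \<in> Ob C \<Longrightarrow> Y \<in> Ob C \<Longrightarrow> zer C X Y \<in> hom C X Y"
  using preadditive unfolding is_preadditive_def by blast

lemma plus_hom [intro, simp]:
  "f \<in> hom C X Y \<Longrightarrow> g \<in> hom C X Y \<Longrightarrow> plus C f g \<in> hom C X Y"
  using preadditive hom_Ob[of f] unfolding is_preadditive_def by blast

lemma ngt_hom [intro, simp]: "f \<in> hom C X Y \<Longrightarrow> ngt C f \<in> hom C X Y"
  using preadditive hom_Ob[of f] unfolding is_preadditive_def by blast

lemma plus_assoc:
  "f \<in> hom C X Y \<Longrightarrow> g \<in> hom C X Y \<Longrightarrow> h \<in> hom C X Y \<Longrightarrow>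
   plus C (plus C f g) h = plus C f (plus C g h)"
  using preadditive hom_Ob[of f] unfolding is_preadditive_def by blast

lemma plus_comm: "f \<in> hom C X Y \<Longrightarrow> g \<in> hom C X Y \<Longrightarrow> plus C f g = plus C g f"
  using preadditive hom_Ob[of f] unfolding is_preadditive_def by blast

lemma plus_zer [simp]: "f \<in> hom C X Y \<Longrightarrow> plus C f (zer C X Y) = f"
  using preadditive hom_Ob[of f] unfolding is_preadditive_def by blast

lemma plus_ngt [simp]: "f \<in> hom C X Y \<Longrightarrow> plus C f (ngt C f) = zer C X Y"
  using preadditive hom_Ob[of f] unfolding is_preadditive_def by blast

lemma comp_plus_left:
  assumes "f \<in> hom C X Y" "g \<in> hom C Y Z" "g' \<in> hom C Y Z"
  shows "cmp C (plus C g g') f = plus C (cmp C g f) (cmp C g' f)"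
  using preadditive assms hom_Ob[OF assms(1)] hom_Ob[OF assms(2)] unfolding is_preadditive_def by blast

lemma comp_plus_right:
  assumes "f \<in> hom C X Y" "f' \<in> hom C X Y" "g \<in> hom C Y Z"
  shows "cmp C g (plus C f f') = plus C (cmp C g f) (cmp C g f')"
proof -
  have "X \<in> Ob C" "Y \<in> Ob C" "Z \<in> Ob C" using assms hom_Ob by blast+
  with assms preadditive show ?thesis unfolding is_preadditive_def by metis
qed

lemma zer_plus [simp]: "f \<in> hom C X Y \<Longrightarrow> plus C (zer C X Y) f = f"
  by (metis hom_Ob plus_comm plus_zer zer_hom)

lemma ngt_unique:
  assumes "f \<in> hom C X Y" "g \<in> hom C X Y" "plus C f g = zer C X Y"
  shows "g = ngt C f"
proof -
  have "g = plus C g (plus C f (ngt C f))" using assms by simp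
  also have "\<dots> = plus C (plus C f g) (ngt C f)" using assms by (metis ngt_hom plus_assoc plus_comm)
  also have "\<dots> = ngt C f" using assms by simp
  finally show ?thesis .
qed

lemma ngt_ngt [simp]: "f \<in> hom C X Y \<Longrightarrow> ngt C (ngt C f) = f"
  by (metis ngt_unique ngt_hom plus_comm plus_ngt)

lemma ngt_zer [simp]: "X \<in> Ob C \<Longrightarrow> Y \<in> Ob C \<Longrightarrow> ngt C (zer C X Y) = zer C X Y"
  by (metis ngt_unique plus_zer zer_hom)

lemma eq_if_plus_ngt_zer:
  assumes "f \<in> hom C X Y" "g \<in> hom C X Y" "plus C f (ngt C g) = zer C X Y"
  shows "f = g"
  using ngt_unique[of "ngt C g" X Y f] assms by (simp add: plus_comm[of f])

lemma zer_if_idem: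
  assumes "f \<in> hom C X Y" "plus C f f = f" shows "f = zer C X Y"
proof -
  have "f = plus C f (plus C f (ngt C f))" using assms by simp
  also have "\<dots> = plus C (plus C f f) (ngt C f)" using assms by (metis plus_assoc ngt_hom)
  also have "\<dots> = zer C X Y" using assms by simp
  finally show ?thesis .
qed

lemma comp_zer [simp]:
  assumes "g \<in> hom C Y Z" "X \<in> Ob C" shows "cmp C g (zer C X Y) = zer C X Z"
proof -
  have Y: "Y \<in> Ob C" using assms hom_Ob by blast
  have "cmp C g (zer C X Y) = plus C (cmp C g (zer C X Y)) (cmp C g (zer C X Y))"
    using comp_plus_right[of "zer C X Y" X Y "zer C X Y" g Z] assms Y by simp
  then show ?thesis using zer_if_idem assms Y by (metis comp_hom zer_hom)
qed

lemma zer_comp [simp]: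
  assumes "f \<in> hom C X Y" "Z \<in> Ob C" shows "cmp C (zer C Y Z) f = zer C X Z"
proof -
  have Y: "Y \<in> Ob C" using assms hom_Ob by blast
  have "cmp C (zer C Y Z) f = plus C (cmp C (zer C Y Z) f) (cmp C (zer C Y Z) f)"
    using comp_plus_left[of f X Y "zer C Y Z" Z "zer C Y Z"] assms Y by simp
  then show ?thesis using zer_if_idem assms Y by (metis comp_hom zer_hom)
qed

lemma zer_comp_zer [simp]:
  "X \<in> Ob C \<Longrightarrow> Y \<in> Ob C \<Longrightarrow> Z \<in> Ob C \<Longrightarrow> cmp C (zer C Y Z) (zer C X Y) = zer C X Z"
  by simp

lemma comp_ngt:
  assumes "f \<in> hom C X Y" "g \<in> hom C Y Z" shows "cmp C g (ngt C f) = ngt C (cmp C g f)"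
proof (rule ngt_unique)
  show "plus C (cmp C g f) (cmp C g (ngt C f)) = zer C X Z"
    using comp_plus_right[of f X Y "ngt C f" g Z] assms hom_Ob[of f] by simp
qed (use assms in auto)

lemma ngt_comp:
  assumes "f \<in> hom C X Y" "g \<in> hom C Y Z" shows "cmp C (ngt C g) f = ngt C (cmp C g f)"
proof (rule ngt_unique)
  show "plus C (cmp C g f) (cmp C (ngt C g) f) = zer C X Z"
    using comp_plus_left[of f X Y g Z "ngt C g"] assms hom_Ob[of g] by simp
qed (use assms in auto)

section \<open>Shift and distinguished triangles\<close>

lemma shO_Ob [intro, simp]: "X \<in> Ob C \<Longrightarrow> shO C X \<in> Ob C"
  using shift unfolding is_shift_def by blast

lemma shM_hom [intro, simp]: "f \<in> hom C X Y \<Longrightarrow> shM C f \<in> hom C (shO C X) (shO C Y)"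
  using shift hom_Ob[of f X Y] unfolding is_shift_def by blast

lemma shM_ident [simp]: "X \<in> Ob C \<Longrightarrow> shM C (ident C X) = ident C (shO C X)"
  using shift unfolding is_shift_def by blast

lemma shM_comp:
  assumes "f \<in> hom C X Y" "g \<in> hom C Y Z" shows "shM C (cmp C g f) = cmp C (shM C g) (shM C f)"
proof -
  have "X \<in> Ob C" "Y \<in> Ob C" "Z \<in> Ob C" using assms hom_Ob by blast+
  with assms shift show ?thesis unfolding is_shift_def by metis
qed

lemma shM_plus:
  assumes "f \<in> hom C X Y" "g \<in> hom C X Y" shows "shM C (plus C f g) = plus C (shM C f) (shM C g)"
proof -
  have "X \<in> Ob C" "Y \<in> Ob C" using assms hom_Ob by blast+
  with assms shift show ?thesis unfolding is_shift_def by metis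
qed

lemma shM_bij: "X \<in> Ob C \<Longrightarrow> Y \<in> Ob C \<Longrightarrow> bij_betw (shM C) (hom C X Y) (hom C (shO C X) (shO C Y))"
  using shift unfolding is_shift_def by blast

lemma shM_inj: "f \<in> hom C X Y \<Longrightarrow> g \<in> hom C X Y \<Longrightarrow> shM C f = shM C g \<Longrightarrow> f = g"
  using shM_bij[of X Y] hom_Ob[of f] unfolding bij_betw_def inj_on_def by blast

lemma shM_surj:
  assumes "X \<in> Ob C" "Y \<in> Ob C" "g \<in> hom C (shO C X) (shO C Y)"
  obtains f where "f \<in> hom C X Y" "shM C f = g"
  using assms shM_bij[of X Y] unfolding bij_betw_def by (metis imageE)

lemma shift_essentially_surj: "Y \<in> Ob C \<Longrightarrow> \<exists>X\<in>Ob C. is_iso_obj C (shO C X) Y"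
  using shift unfolding is_shift_def by blast

lemma shM_zer [simp]:
  assumes "X \<in> Ob C" "Y \<in> Ob C" shows "shM C (zer C X Y) = zer C (shO C X) (shO C Y)"
proof (rule zer_if_idem)
  show "plus C (shM C (zer C X Y)) (shM C (zer C X Y)) = shM C (zer C X Y)"
    using shM_plus[of "zer C X Y" X Y "zer C X Y"] assms by simp
qed (use assms in simp)

lemma zero_obj_exists: obtains N where "is_zero_obj C N"
  using additive unfolding is_additive_def by blast

lemma zero_obj_Ob: "is_zero_obj C N \<Longrightarrow> N \<in> Ob C"
  unfolding is_zero_obj_def by blast

lemma zero_obj_shift: assumes "is_zero_obj C N" shows "is_zero_obj C (shO C N)"
  using assms shM_ident[of N] shM_zer[of N N] unfolding is_zero_obj_def by simp

lemma dist_iso_closed_axiom: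
  "\<forall>f g h f' g' h' u v w. dist C f g h \<and> is_triangle C f' g' h' \<and>
     is_isomorphism C u \<and> is_isomorphism C v \<and> is_isomorphism C w \<and>
     u \<in> hom C (tdom C f) (tdom C f') \<and> v \<in> hom C (tdom C g) (tdom C g') \<and>
     w \<in> hom C (tdom C h) (tdom C h') \<and>
     cmp C v f = cmp C f' u \<and> cmp C w g = cmp C g' v \<and> cmp C (shM C u) h = cmp C h' w
     \<longrightarrow> dist C f' g' h'"
  using triangulated unfolding is_triangulated_def by (elim conjE) assumption

lemma dist_morphism_axiom:
  "\<forall>f g h f' g' h' u v. dist C f g h \<and> dist C f' g' h' \<and>
     u \<in> hom C (tdom C f) (tdom C f') \<and> v \<in> hom C (tdom C g) (tdom C g') \<and>
     cmp C v f = cmp C f' u \<longrightarrow>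
     (\<exists>w\<in>hom C (tdom C h) (tdom C h'). cmp C w g = cmp C g' v \<and> cmp C (shM C u) h = cmp C h' w)"
  using triangulated unfolding is_triangulated_def by (elim conjE) assumption

lemma octahedral_axiom:
  "\<forall>f g f1 f2 g1 g2 h1 h2. tcod C f = tdom C g \<and>
     dist C f f1 f2 \<and> dist C g g1 g2 \<and> dist C (cmp C g f) h1 h2 \<longrightarrow>
     (\<exists>u v. u \<in> hom C (tdom C f2) (tdom C h2) \<and> v \<in> hom C (tdom C h2) (tdom C g2) \<and>
        dist C u v (cmp C (shM C f1) g2) \<and>
        cmp C u f1 = cmp C h1 g \<and> cmp C h2 u = f2 \<and>
        cmp C v h1 = g1 \<and> cmp C g2 v = cmp C (shM C f) h2)"
  using triangulated unfolding is_triangulated_def by (elim conjE) assumption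

lemma dist_third_hom:
  "dist C f g h \<Longrightarrow> f \<in> hom C X Y \<Longrightarrow> g \<in> hom C Y Z \<Longrightarrow> h \<in> hom C Z (shO C X)"
  unfolding dist_def is_triangle_def hom_def by auto

lemma dist_rotate: "dist C f g h \<longleftrightarrow> dist C g h (ngt C (shM C f))"
  using triangulated unfolding is_triangulated_def by (elim conjE) (erule allE)+

lemma dist_rotateD: "dist C f g h \<Longrightarrow> dist C g h (ngt C (shM C f))"
  using dist_rotate by blast

lemma dist_ident_zero_axiom:
  "\<forall>X\<in>Ob C. \<forall>N. is_zero_obj C N \<longrightarrow> dist C (ident C X) (zer C X N) (zer C N (shO C X))"
  using triangulated unfolding is_triangulated_def by (elim conjE) assumption

lemma dist_extend_axiom: "\<forall>f\<in>Mor C. \<exists>g h. dist C f g h"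
  using triangulated unfolding is_triangulated_def by (elim conjE) assumption

lemma dist_ident_zero:
  "X \<in> Ob C \<Longrightarrow> is_zero_obj C N \<Longrightarrow> dist C (ident C X) (zer C X N) (zer C N (shO C X))"
  using dist_ident_zero_axiom by blast

lemma dist_extend:
  assumes "f \<in> hom C X Y"
  obtains Z g h where "dist C f g h" "g \<in> hom C Y Z" "h \<in> hom C Z (shO C X)"
proof -
  obtain g h where "dist C f g h" using hom_memD[OF assms] dist_extend_axiom by blast
  with assms that show ?thesis unfolding dist_def is_triangle_def hom_def by auto
qed

lemma dist_iso_closed:
  assumes "dist C f g h" "is_triangle C f' g' h'"
    and "is_isomorphism C u" "is_isomorphism C v" "is_isomorphism C w"
    and "u \<in> hom C (tdom C f) (tdom C f')" "v \<in> hom C (tdom C g) (tdom C g')"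
    and "w \<in> hom C (tdom C h) (tdom C h')"
    and "cmp C v f = cmp C f' u" "cmp C w g = cmp C g' v" "cmp C (shM C u) h = cmp C h' w"
  shows "dist C f' g' h'"
  using dist_iso_closed_axiom assms by blast

lemma dist_morphism:
  assumes "dist C f g h" "f \<in> hom C X Y" "g \<in> hom C Y Z"
    and "dist C f' g' h'" "f' \<in> hom C X' Y'" "g' \<in> hom C Y' Z'"
    and "u \<in> hom C X X'" "v \<in> hom C Y Y'" "cmp C v f = cmp C f' u"
  obtains w where "w \<in> hom C Z Z'" "cmp C w g = cmp C g' v" "cmp C (shM C u) h = cmp C h' w"
proof -
  have "h \<in> hom C Z (shO C X)" "h' \<in> hom C Z' (shO C X')"
    using assms dist_third_hom by blast+
  then have "tdom C f = X" "tdom C g = Y" "tdom C h = Z" "tdom C f' = X'" "tdom C g' = Y'" "tdom C h' = Z'"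
    using assms hom_memD by blast+
  with assms that show ?thesis
    using dist_morphism_axiom[rule_format, of f g h f' g' h' u v] by auto
qed

lemma octahedral:
  assumes "dist C f f1 f2" "f \<in> hom C X Y" "f1 \<in> hom C Y Zf"
    and "dist C g g1 g2" "g \<in> hom C Y Z" "g1 \<in> hom C Z Zg"
    and "dist C (cmp C g f) h1 h2" "h1 \<in> hom C Z Zgf"
  obtains u v w where "dist C u v w" "u \<in> hom C Zf Zgf" "v \<in> hom C Zgf Zg"
proof -
  have "f2 \<in> hom C Zf (shO C X)" "g2 \<in> hom C Zg (shO C Y)" "h2 \<in> hom C Zgf (shO C X)"
    using assms dist_third_hom comp_hom by blast+
  then have "tcod C f = tdom C g" "tdom C f2 = Zf" "tdom C h2 = Zgf" "tdom C g2 = Zg"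
    using assms hom_memD by metis+
  with that assms(1,4,7) show ?thesis
    using octahedral_axiom[rule_format, of f g f1 f2 g1 g2 h1 h2] by auto
qed

section \<open>Exactness of Hom along distinguished triangles\<close>

lemma biproduct_of_split_kernel:
  assumes s: "s \<in> hom C Y B" and p: "p \<in> hom C B Y" and q: "q \<in> hom C B K" and j: "j \<in> hom C K B"
    and ps: "cmp C p s = ident C Y" and qj: "cmp C q j = ident C K" and qs: "cmp C q s = zer C Y K"
    and kernel: "\<And>d. d \<in> hom C B B \<Longrightarrow> cmp C q d = zer C B K \<Longrightarrow> \<exists>x\<in>hom C B Y. cmp C s x = d"
  shows "is_biproduct C Y K B"
proof -
  \<comment> \<open>Correct \<open>j\<close> to a section \<open>j'\<close> of \<open>q\<close> with \<open>p j' = 0\<close>; the defect \<open>d = 1 - (s p + j' q)\<close>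
    is killed by \<open>q\<close>, so \<open>d = s x\<close>, and killed by \<open>p\<close>, so \<open>x = p s x = 0\<close>.\<close>
  have Obs: "Y \<in> Ob C" "B \<in> Ob C" "K \<in> Ob C" using s q hom_Ob by blast+
  have pj: "cmp C p j \<in> hom C K Y" using p j by blast
  define j' where "j' = plus C j (ngt C (cmp C s (cmp C p j)))"
  have j': "j' \<in> hom C K B" unfolding j'_def using s pj j by blast
  have "cmp C p (cmp C s (cmp C p j)) = cmp C p j"
    using comp_assoc[OF pj s p] ps pj by simp
  then have pj': "cmp C p j' = zer C K Y"
    unfolding j'_def
    using comp_plus_right[OF j ngt_hom[OF comp_hom[OF pj s]] p] comp_ngt[OF comp_hom[OF pj s] p] pj
    by simp
  have "cmp C q (cmp C s (cmp C p j)) = zer C K K"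
    using comp_assoc[OF pj s q] qs pj Obs by simp
  then have qj': "cmp C q j' = ident C K"
    unfolding j'_def
    using comp_plus_right[OF j ngt_hom[OF comp_hom[OF pj s]] q] comp_ngt[OF comp_hom[OF pj s] q] qj Obs
    by simp
  define e where "e = plus C (cmp C s p) (cmp C j' q)"
  have e: "e \<in> hom C B B" unfolding e_def using s p j' q by blast
  have qe: "cmp C q e = q"
    unfolding e_def using comp_plus_right[OF comp_hom[OF p s] comp_hom[OF q j'] q]
      comp_assoc[OF p s q] comp_assoc[OF q j' q] qs qj' p q Obs by simp
  have pe: "cmp C p e = p"
    unfolding e_def using comp_plus_right[OF comp_hom[OF p s] comp_hom[OF q j'] p]
      comp_assoc[OF p s p] comp_assoc[OF q j' p] ps pj' p q Obs by simp
  define d where "d = plus C (ident C B) (ngt C e)"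
  have d: "d \<in> hom C B B" unfolding d_def using e Obs by blast
  have "cmp C q d = zer C B K"
    unfolding d_def using comp_plus_right[OF ident_hom ngt_hom[OF e] q] comp_ngt[OF e q] qe q Obs
    by simp
  then obtain x where x: "x \<in> hom C B Y" and sx: "cmp C s x = d" using kernel d by blast
  have pd: "cmp C p d = zer C B Y"
    unfolding d_def using comp_plus_right[OF ident_hom ngt_hom[OF e] p] comp_ngt[OF e p] pe p Obs
    by simp
  have "x = cmp C p (cmp C s x)" using comp_assoc[OF x s p] ps x by simp
  then have "x = zer C B Y" using sx pd by simp
  then have "d = zer C B B" using sx s Obs by simp
  then have "e = ident C B" using eq_if_plus_ngt_zer[of "ident C B" B B e] e Obs unfolding d_def by simp
  then show ?thesis
    unfolding is_biproduct_def e_def using Obs s j' p q ps qj' pj' qs by blast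
qed

lemma dist_comp_zero:
  assumes d: "dist C f g h" and f: "f \<in> hom C X Y" and g: "g \<in> hom C Y Z"
  shows "cmp C g f = zer C X Z"
proof -
  obtain N where N: "is_zero_obj C N" using zero_obj_exists .
  have X: "X \<in> Ob C" and Z: "Z \<in> Ob C" using f g hom_Ob by blast+
  obtain w where "w \<in> hom C N Z" "cmp C w (zer C X N) = cmp C g f"
    using dist_morphism[OF dist_ident_zero[OF X N] ident_hom[OF X] zer_hom[OF X zero_obj_Ob[OF N]]
        d f g ident_hom[OF X] f]
    using f by auto
  then show ?thesis using X by simp
qed

lemma dist_factor_through_first:
  assumes d: "dist C f g h" and f: "f \<in> hom C X Y" and g: "g \<in> hom C Y Z"
    and t: "t \<in> hom C W Y" and gt: "cmp C g t = zer C W Z"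
  obtains s where "s \<in> hom C W X" "cmp C f s = t"
proof -
  obtain N where N: "is_zero_obj C N" using zero_obj_exists .
  have W: "W \<in> Ob C" and N_Ob: "N \<in> Ob C" and Z: "Z \<in> Ob C"
    using t g N zero_obj_Ob hom_Ob by blast+
  have zero_dist: "dist C (zer C W N) (zer C N (shO C W)) (ngt C (ident C (shO C W)))"
    using dist_rotateD[OF dist_ident_zero[OF W N]] W by simp
  have comm: "cmp C (zer C N Z) (zer C W N) = cmp C g t" using gt W N_Ob Z by simp
  obtain w where w: "w \<in> hom C (shO C W) (shO C X)"
    and "cmp C (shM C t) (ngt C (ident C (shO C W))) = cmp C (ngt C (shM C f)) w"
    using dist_morphism[OF zero_dist zer_hom[OF W N_Ob] zer_hom[OF N_Ob shO_Ob[OF W]]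
        dist_rotateD[OF d] g dist_third_hom[OF d f g] t zer_hom[OF N_Ob Z] comm] by blast
  then have "ngt C (shM C t) = ngt C (cmp C (shM C f) w)"
    using comp_ngt[OF ident_hom shM_hom[OF t]] comp_ident[OF shM_hom[OF t]] ngt_comp[OF w shM_hom[OF f]] W
    by simp
  then have "shM C t = cmp C (shM C f) w"
    by (metis ngt_ngt shM_hom t f w comp_hom)
  moreover obtain s where s: "s \<in> hom C W X" "shM C s = w"
    using shM_surj[OF W _ w] f hom_Ob by blast
  ultimately have "shM C (cmp C f s) = shM C t" using shM_comp[OF s(1) f] by simp
  then have "cmp C f s = t" using shM_inj[OF comp_hom[OF s(1) f] t] by blast
  with s that show ?thesis by blast
qed

lemma dist_factor_through_second:
  assumes d: "dist C f g h" and f: "f \<in> hom C X Y" and g: "g \<in> hom C Y Z"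
    and t: "t \<in> hom C Y W" and tf: "cmp C t f = zer C X W"
  obtains s where "s \<in> hom C Z W" "cmp C s g = t"
proof -
  obtain N where N: "is_zero_obj C N" using zero_obj_exists .
  have W: "W \<in> Ob C" and N_Ob: "N \<in> Ob C" and X: "X \<in> Ob C"
    using t f N zero_obj_Ob hom_Ob by blast+
  have "dist C (ident C W) (zer C W (shO C N)) (ngt C (shM C (zer C N W)))"
    using dist_ident_zero[OF W zero_obj_shift[OF N]] W N_Ob by simp
  then have zero_dist: "dist C (zer C N W) (ident C W) (zer C W (shO C N))"
    using dist_rotate by blast
  have comm: "cmp C t f = cmp C (zer C N W) (zer C X N)" using tf X N_Ob W by simp
  obtain w where "w \<in> hom C Z W" "cmp C w g = cmp C (ident C W) t"
    using dist_morphism[OF d f g zero_dist zer_hom[OF N_Ob W] ident_hom[OF W] zer_hom[OF X N_Ob] t comm]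
    by blast
  with t that show ?thesis by simp
qed

lemma dist_hom_zero:
  assumes "dist C f g h" "f \<in> hom C X Y" "g \<in> hom C Y Z"
    and "t \<in> hom C Y W" "cmp C t f = zer C X W"
    and "\<And>s. s \<in> hom C Z W \<Longrightarrow> s = zer C Z W"
  shows "t = zer C Y W"
proof -
  obtain s where "s \<in> hom C Z W" "cmp C s g = t"
    using dist_factor_through_second[OF assms(1-5)] .
  with assms(3,6) show ?thesis using hom_Ob by fastforce
qed

lemma split_mono_summand:
  assumes s: "s \<in> hom C Y B" and p: "p \<in> hom C B Y" and ps: "cmp C p s = ident C Y"
  obtains K where "is_biproduct C Y K B"
proof -
  \<comment> \<open>In the triangle \<open>Y \<rightarrow> B \<rightarrow> K \<rightarrow> Y[1]\<close> on \<open>s\<close> the third map vanishes, as \<open>s[1] r = 0\<close>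
    and \<open>s[1]\<close> has the retraction \<open>p[1]\<close>; so \<open>q\<close> splits.\<close>
  obtain K q r where d: "dist C s q r" and q: "q \<in> hom C B K" and r: "r \<in> hom C K (shO C Y)"
    using dist_extend[OF s] .
  have Obs: "Y \<in> Ob C" "B \<in> Ob C" "K \<in> Ob C" using s q hom_Ob by blast+
  have d': "dist C q r (ngt C (shM C s))" using dist_rotateD[OF d] .
  have "ngt C (cmp C (shM C s) r) = zer C K (shO C B)"
    using dist_comp_zero[OF dist_rotateD[OF d'] r ngt_hom[OF shM_hom[OF s]]] ngt_comp[OF r shM_hom[OF s]]
    by simp
  then have sr: "cmp C (shM C s) r = zer C K (shO C B)"
    by (metis comp_hom ngt_ngt ngt_zer r s shM_hom Obs(2,3) shO_Ob)
  have "r = cmp C (shM C (cmp C p s)) r" using ps r Obs by simp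
  also have "\<dots> = cmp C (shM C p) (cmp C (shM C s) r)"
    using shM_comp[OF s p] comp_assoc[OF r shM_hom[OF s] shM_hom[OF p]] by simp
  finally have r0: "r = zer C K (shO C Y)" using sr p Obs by simp
  obtain j where j: "j \<in> hom C K B" "cmp C q j = ident C K"
    using dist_factor_through_first[OF d' q r ident_hom[OF Obs(3)]] r0 r Obs by auto
  show ?thesis
  proof (rule that, rule biproduct_of_split_kernel[OF s p q j(1) ps j(2)])
    show "cmp C q s = zer C Y K" using dist_comp_zero[OF d s q] .
    show "\<exists>x\<in>hom C B Y. cmp C s x = e" if "e \<in> hom C B B" "cmp C q e = zer C B K" for e
      using dist_factor_through_first[OF d s q that] by blast
  qed
qed

section \<open>Cotorsion pairs\<close>

lemma ext1_zeroD:
  "ext1_zero C A B \<Longrightarrow> X \<in> A \<Longrightarrow> Y \<in> B \<Longrightarrow> t \<in> hom C X (shO C Y) \<Longrightarrow> t = zer C X (shO C Y)"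
  unfolding ext1_zero_def by blast

lemma ext_starI:
  "dist C f g h \<Longrightarrow> f \<in> hom C A X \<Longrightarrow> g \<in> hom C X B \<Longrightarrow> A \<in> M \<Longrightarrow> B \<in> N \<Longrightarrow>
   X \<in> ext_star C M N"
  unfolding ext_star_def using hom_Ob by blast

lemma shO_in_shift_up: "Y \<in> A \<Longrightarrow> Y \<in> Ob C \<Longrightarrow> shO C Y \<in> shift_up C A"
  unfolding shift_up_def is_iso_obj_def
  by (intro CollectI conjI shO_Ob bexI[of _ Y] bexI[of _ "ident C (shO C Y)"]) simp_all

lemma is_isomorphismI:
  "f \<in> hom C X Y \<Longrightarrow> g \<in> hom C Y X \<Longrightarrow> cmp C g f = ident C X \<Longrightarrow> cmp C f g = ident C Y \<Longrightarrow>
   is_isomorphism C f"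
  unfolding is_isomorphism_def using hom_memD by metis

lemma hom_zero_from_iso:
  assumes iso: "is_iso_obj C X X'" and t: "t \<in> hom C X W"
    and zero: "\<And>s. s \<in> hom C X' W \<Longrightarrow> s = zer C X' W"
  shows "t = zer C X W"
proof -
  obtain i j where i: "i \<in> hom C X X'" and j: "j \<in> hom C X' X" and ji: "cmp C j i = ident C X"
    using iso unfolding is_iso_obj_def by blast
  have "t = cmp C (cmp C t j) i" using comp_assoc[OF i j t] ji t by simp
  with zero[OF comp_hom[OF j t]] i t show ?thesis using hom_Ob by fastforce
qed

lemma ext1_zero_shift_down:
  assumes "ext1_zero C S V" "P \<in> shift_down C S" "Y \<in> V" "t \<in> hom C (shO C P) (shO C Y)"
  shows "t = zer C (shO C P) (shO C Y)"
proof -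
  obtain S' where "S' \<in> S" "is_iso_obj C (shO C P) S'" using assms(2) unfolding shift_down_def by blast
  with assms show ?thesis using hom_zero_from_iso ext1_zeroD by blast
qed

lemma hom_zero_shift_down:
  assumes "ext1_zero C S T" "P \<in> shift_down C S" "Q \<in> T" "t \<in> hom C P Q"
  shows "t = zer C P Q"
proof -
  have "shM C t = zer C (shO C P) (shO C Q)"
    using ext1_zero_shift_down[OF assms(1-3) shM_hom[OF assms(4)]] .
  with assms(4) show ?thesis using shM_inj zer_hom hom_Ob shM_zer by metis
qed

lemma cotorsion_pair_left_memI:
  assumes cp: "cotorsion_pair C U V" and Y: "Y \<in> Ob C"
    and ext: "\<And>V' t. V' \<in> V \<Longrightarrow> t \<in> hom C Y (shO C V') \<Longrightarrow> t = zer C Y (shO C V')"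
  shows "Y \<in> U"
proof -
  obtain A B f g h where A: "A \<in> U" and B: "B \<in> shift_up C V" and d: "dist C f g h"
    and f: "f \<in> hom C A Y" and g: "g \<in> hom C Y B"
    using cp Y unfolding cotorsion_pair_def ext_star_def by blast
  obtain V' k k' where V': "V' \<in> V" and k: "k \<in> hom C (shO C V') B"
    and k': "k' \<in> hom C B (shO C V')" and kk': "cmp C k k' = ident C B"
    using B unfolding shift_up_def is_iso_obj_def by blast
  have "g = cmp C k (cmp C k' g)" using comp_assoc[OF g k' k] kk' g by simp
  then have "g = zer C Y B" using ext[OF V' comp_hom[OF g k']] k Y by simp
  then obtain s where s: "s \<in> hom C Y A" and fs: "cmp C f s = ident C Y"
    using dist_factor_through_first[OF d f g ident_hom[OF Y]] g Y hom_Ob by force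
  obtain K where "is_biproduct C Y K A" using split_mono_summand[OF s f fs] .
  with A cp show ?thesis unfolding cotorsion_pair_def is_subcat_def by blast
qed

lemma cotorsion_pair_left_extension_closed:
  assumes cp: "cotorsion_pair C U V" and d: "dist C f g h"
    and f: "f \<in> hom C X Y" and g: "g \<in> hom C Y Z" and X: "X \<in> U" and Z: "Z \<in> U"
  shows "Y \<in> U"
proof (rule cotorsion_pair_left_memI[OF cp])
  have ext: "ext1_zero C U V" using cp unfolding cotorsion_pair_def by blast
  show "Y \<in> Ob C" using f hom_Ob by blast
  fix V' t assume V': "V' \<in> V" and t: "t \<in> hom C Y (shO C V')"
  show "t = zer C Y (shO C V')"
    using dist_hom_zero[OF d f g t ext1_zeroD[OF ext X V' comp_hom[OF f t]]] ext1_zeroD[OF ext Z V'] .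
qed

lemma cotorsion_pair_shifted_decomposition:
  assumes cp: "cotorsion_pair C S T" and Y: "Y \<in> Ob C"
  obtains P Q s1 s2 s3 where "P \<in> shift_down C S" "Q \<in> T" "dist C s1 s2 s3"
    "s1 \<in> hom C P Y" "s2 \<in> hom C Y Q"
proof -
  \<comment> \<open>Decompose \<open>Y[1] \<in> \<S> * \<T>[1]\<close>, replace its ends by the isomorphic \<open>P[1]\<close> and \<open>Q[1]\<close>,
    and desuspend the resulting triangle.\<close>
  obtain S' T' p q r where S': "S' \<in> S" and T': "T' \<in> shift_up C T" and d: "dist C p q r"
    and p: "p \<in> hom C S' (shO C Y)" and q: "q \<in> hom C (shO C Y) T'"
    using cp Y unfolding cotorsion_pair_def ext_star_def by blast
  have r: "r \<in> hom C T' (shO C S')" using dist_third_hom[OF d p q] .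
  obtain Q \<kappa> \<kappa>' where Q: "Q \<in> T" and \<kappa>: "\<kappa> \<in> hom C (shO C Q) T'" and \<kappa>': "\<kappa>' \<in> hom C T' (shO C Q)"
    and \<kappa>'\<kappa>: "cmp C \<kappa>' \<kappa> = ident C (shO C Q)" and \<kappa>\<kappa>': "cmp C \<kappa> \<kappa>' = ident C T'"
    using T' unfolding shift_up_def is_iso_obj_def by blast
  obtain P where P: "P \<in> Ob C" and "is_iso_obj C (shO C P) S'"
    using shift_essentially_surj p hom_Ob by blast
  then obtain \<iota> \<iota>' where \<iota>: "\<iota> \<in> hom C (shO C P) S'" and \<iota>': "\<iota>' \<in> hom C S' (shO C P)"
    and \<iota>'\<iota>: "cmp C \<iota>' \<iota> = ident C (shO C P)" and \<iota>\<iota>': "cmp C \<iota> \<iota>' = ident C S'"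
    unfolding is_iso_obj_def by blast
  have Q_Ob: "Q \<in> Ob C" using cp Q unfolding cotorsion_pair_def is_subcat_def by blast
  define x1 where "x1 = cmp C p \<iota>"
  define x2 where "x2 = cmp C \<kappa>' q"
  define x3 where "x3 = cmp C (shM C \<iota>') (cmp C r \<kappa>)"
  have x1: "x1 \<in> hom C (shO C P) (shO C Y)" unfolding x1_def using \<iota> p by blast
  have x2: "x2 \<in> hom C (shO C Y) (shO C Q)" unfolding x2_def using \<kappa>' q by blast
  have x3: "x3 \<in> hom C (shO C Q) (shO C (shO C P))" unfolding x3_def using \<kappa> r \<iota>' by blast
  have "dist C x1 x2 x3"
  proof (rule dist_iso_closed[OF d, where u=\<iota>' and v="ident C (shO C Y)" and w=\<kappa>'])
    show "is_triangle C x1 x2 x3"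
      unfolding is_triangle_def using x1 x2 x3 hom_memD by metis
    show "is_isomorphism C \<iota>'" using is_isomorphismI[OF \<iota>' \<iota> \<iota>\<iota>' \<iota>'\<iota>] .
    show "is_isomorphism C (ident C (shO C Y))" using is_isomorphismI[OF ident_hom ident_hom] Y by simp
    show "is_isomorphism C \<kappa>'" using is_isomorphismI[OF \<kappa>' \<kappa> \<kappa>\<kappa>' \<kappa>'\<kappa>] .
    show "\<iota>' \<in> hom C (tdom C p) (tdom C x1)" "ident C (shO C Y) \<in> hom C (tdom C q) (tdom C x2)"
      "\<kappa>' \<in> hom C (tdom C r) (tdom C x3)"
      using \<iota>' p x1 q x2 \<kappa>' r x3 Y hom_memD by auto
    show "cmp C (ident C (shO C Y)) p = cmp C x1 \<iota>'"
      unfolding x1_def using p comp_assoc[OF \<iota>' \<iota> p] \<iota>\<iota>' by simp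
    show "cmp C \<kappa>' q = cmp C x2 (ident C (shO C Y))"
      using x2 unfolding x2_def by simp
    have "cmp C x3 \<kappa>' = cmp C (shM C \<iota>') (cmp C (cmp C r \<kappa>) \<kappa>')"
      unfolding x3_def using comp_assoc[OF \<kappa>' comp_hom[OF \<kappa> r] shM_hom[OF \<iota>']] by simp
    also have "\<dots> = cmp C (shM C \<iota>') r"
      using comp_assoc[OF \<kappa>' \<kappa> r] \<kappa>\<kappa>' r by simp
    finally show "cmp C (shM C \<iota>') r = cmp C x3 \<kappa>'" by simp
  qed
  moreover obtain s1 where s1: "s1 \<in> hom C P Y" "shM C s1 = ngt C x1"
    using shM_surj[OF P Y] x1 by blast
  moreover obtain s2 where s2: "s2 \<in> hom C Y Q" "shM C s2 = ngt C x2"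
    using shM_surj[OF Y Q_Ob] x2 by blast
  moreover obtain s3 where "shM C s3 = ngt C x3"
    using shM_surj[OF Q_Ob shO_Ob[OF P]] x3 by blast
  ultimately have "dist C (ngt C (shM C s1)) (ngt C (shM C s2)) (ngt C (shM C s3))"
    using x1 x2 x3 by simp
  then have "dist C s1 s2 s3" using dist_rotate by blast
  moreover have "P \<in> shift_down C S" unfolding shift_down_def using P S' \<open>is_iso_obj C (shO C P) S'\<close> by blast
  ultimately show ?thesis using that Q s1 s2 by blast
qed

end

section \<open>Twin cotorsion pairs\<close>

locale twin_cotorsion = triangulated_category +
  fixes S T U V :: "'o set"
  assumes twin: "twin_cotorsion_pair C S T U V"
begin

lemma cotorsion_pair_ST: "cotorsion_pair C S T"
  and cotorsion_pair_UV: "cotorsion_pair C U V"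
  and ext1_zero_SV: "ext1_zero C S V"
  using twin unfolding twin_cotorsion_pair_def by blast+

lemma S_subset_U: "S \<subseteq> U"
proof
  fix X assume X: "X \<in> S"
  then have "X \<in> Ob C" using cotorsion_pair_ST unfolding cotorsion_pair_def is_subcat_def by blast
  then show "X \<in> U"
    using cotorsion_pair_left_memI[OF cotorsion_pair_UV] ext1_zeroD[OF ext1_zero_SV X] by blast
qed

lemma decomposition_right_part_in_U:
  assumes d: "dist C p q r" and p: "p \<in> hom C P Y" and q: "q \<in> hom C Y Q'"
    and P: "P \<in> shift_down C S" and Q': "Q' \<in> U"
    and e: "dist C s1 s2 s3" and s1: "s1 \<in> hom C P' Y" and s2: "s2 \<in> hom C Y Q"
    and P': "P' \<in> shift_down C S" and Q: "Q \<in> T"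
  shows "Q \<in> U"
proof (rule cotorsion_pair_left_memI[OF cotorsion_pair_UV])
  show "Q \<in> Ob C" using s2 hom_Ob by blast
  fix V' t assume V': "V' \<in> V" and t: "t \<in> hom C Q (shO C V')"
  have ext1_UV: "ext1_zero C U V" and ext1_ST: "ext1_zero C S T"
    using cotorsion_pair_UV cotorsion_pair_ST unfolding cotorsion_pair_def by blast+
  have "cmp C s2 p = zer C P Q" using hom_zero_shift_down[OF ext1_ST P Q comp_hom[OF p s2]] .
  then have "cmp C (cmp C t s2) p = zer C P (shO C V')"
    using comp_assoc[OF p s2 t] t hom_Ob[OF p] by simp
  then have ts2: "cmp C t s2 = zer C Y (shO C V')"
    using dist_hom_zero[OF d p q comp_hom[OF s2 t]] ext1_zeroD[OF ext1_UV Q' V'] by blast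
  show "t = zer C Q (shO C V')"
    using dist_hom_zero[OF dist_rotateD[OF e] s2 dist_third_hom[OF e s1 s2] t ts2]
      ext1_zero_shift_down[OF ext1_zero_SV P' V'] by blast
qed

lemma cone_in_Cplus:
  assumes d1: "dist C f a h" "f \<in> hom C V0 U0" "a \<in> hom C U0 X" "U0 \<in> U" "V0 \<in> V"
    and d2: "dist C f' b h'" "f' \<in> hom C A B" "b \<in> hom C B U0" "shO C A \<in> T" "shO C B \<in> S"
    and d3: "dist C (cmp C a b) z k" "z \<in> hom C X Z"
  shows "Z \<in> Cplus C T U V"
proof -
  have h': "h' \<in> hom C U0 (shO C A)" using dist_third_hom[OF d2(1-3)] .
  have h: "h \<in> hom C X (shO C V0)" using dist_third_hom[OF d1(1-3)] .
  have "shO C A \<in> U"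
    using cotorsion_pair_left_extension_closed[OF cotorsion_pair_UV dist_rotateD[OF dist_rotateD[OF d2(1)]]
        h' ngt_hom[OF shM_hom[OF d2(2)]] d1(4)] d2(5) S_subset_U by blast
  then have A_W: "shO C A \<in> Wcore T U" unfolding Wcore_def using d2(4) by blast
  obtain u v w where "dist C u v w" "u \<in> hom C (shO C A) Z" "v \<in> hom C Z (shO C V0)"
    using octahedral[OF dist_rotateD[OF d2(1)] d2(3) h' dist_rotateD[OF d1(1)] d1(3) h d3] .
  from ext_starI[OF this A_W shO_in_shift_up[OF d1(5)]] show ?thesis
    unfolding Cplus_def using d1(2) hom_Ob by blast
qed

lemma cone_in_Cminus:
  assumes X: "X \<in> Cminus C S T U" and c: "c \<in> hom C B X" and B: "shO C B \<in> S"
    and d: "dist C c z k" and z: "z \<in> hom C X Z"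
  shows "Z \<in> Cminus C S T U"
proof -
  obtain P W \<alpha> \<beta> \<gamma> where P: "P \<in> shift_down C S" and W: "W \<in> Wcore T U"
    and e: "dist C \<alpha> \<beta> \<gamma>" and \<alpha>: "\<alpha> \<in> hom C P X" and \<beta>: "\<beta> \<in> hom C X W"
    using X unfolding Cminus_def ext_star_def by blast
  have z\<alpha>: "cmp C z \<alpha> \<in> hom C P Z" using \<alpha> z by blast
  obtain Q' q r where e': "dist C (cmp C z \<alpha>) q r" and q: "q \<in> hom C Z Q'"
    using dist_extend[OF z\<alpha>] by blast
  obtain u v w where "dist C u v w" "u \<in> hom C W Q'" "v \<in> hom C Q' (shO C B)"
    using octahedral[OF e \<alpha> \<beta> dist_rotateD[OF d] z dist_third_hom[OF d c z] e' q] .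
  moreover have "W \<in> U" "shO C B \<in> U" using W B S_subset_U unfolding Wcore_def by blast+
  ultimately have Q': "Q' \<in> U"
    using cotorsion_pair_left_extension_closed[OF cotorsion_pair_UV] by blast
  obtain P' Q s1 s2 s3 where P': "P' \<in> shift_down C S" and Q: "Q \<in> T" and e'': "dist C s1 s2 s3"
    and s1: "s1 \<in> hom C P' Z" and s2: "s2 \<in> hom C Z Q"
    using cotorsion_pair_shifted_decomposition[OF cotorsion_pair_ST] z hom_Ob by metis
  have "Q \<in> Wcore T U"
    using decomposition_right_part_in_U[OF e' z\<alpha> q P Q' e'' s1 s2 P' Q] Q unfolding Wcore_def by blast
  with ext_starI[OF e'' s1 s2 P'] show ?thesis unfolding Cminus_def .
qed

end

theorem claim3p4:
  fixes C :: "('o, 'm) tcat"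
    and S T U V :: "'o set"
    and X Uo Vo A B Z :: 'o
    and f a h f' b h' z k :: 'm
  assumes tri: "is_triangulated C"
    and twin: "twin_cotorsion_pair C S T U V"
    and X: "X \<in> Ob C"
    \<comment> \<open>V \<rightarrow> U \<rightarrow>a C \<rightarrow> V[1], U \<in> \<U>, V \<in> \<V>\<close>
    and t1: "dist C f a h" "f \<in> hom C Vo Uo" "a \<in> hom C Uo X" "Uo \<in> U" "Vo \<in> V"
    \<comment> \<open>T[-1] \<rightarrow> S[-1] \<rightarrow>b U \<rightarrow> T, with A = T[-1], B = S[-1]\<close>
    and t2: "dist C f' b h'" "f' \<in> hom C A B" "b \<in> hom C B Uo"
            "shO C A \<in> T" "shO C B \<in> S"
    \<comment> \<open>S[-1] \<rightarrow>(a b) C \<rightarrow>z Z_C \<rightarrow> S\<close>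
    and t3: "dist C (cmp C a b) z k" "z \<in> hom C X Z"
  shows "Z \<in> Cplus C T U V \<and> (X \<in> Cminus C S T U \<longrightarrow> Z \<in> Hheart C S T U V)"
proof -
  interpret twin_cotorsion C S T U V
    using tri twin by (intro twin_cotorsion.intro triangulated_category.intro twin_cotorsion_axioms.intro)
  have "Z \<in> Cplus C T U V" using cone_in_Cplus[OF t1 t2 t3] .
  moreover have "Z \<in> Cminus C S T U" if "X \<in> Cminus C S T U"
    using cone_in_Cminus[OF that comp_hom[OF t2(3) t1(3)] t2(5) t3] .
  ultimately show ?thesis unfolding Hheart_def by blast
qed

end
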